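(* Let $m\ge1$, $0<x_1<x_2<\cdots<x_m<1$, and let $k_0\ge0$, $k_1\ge0$ with $k_0+k_1>0$. Define $G:[0,1]\times[0,1]\to\mathbb{R}$ by $$G(x,\zeta)=\begin{cases}\dfrac{(k_1\zeta-k_1-1)(k_0x+1)}{k_0+k_1+k_0k_1}, & 0\le x<\zeta,\\[2mm] \dfrac{(k_1x-k_1-1)(k_0\zeta+1)}{k_0+k_1+k_0k_1}, & \zeta\le x\le 1.\end{cases}$$ Then the $m\times m$ matrix $\big(G(x_i,x_j)\big)_{i,j=1}^m$ is invertible.
   Context: $G$ is the Green's function of the steady-state problem $\bar z_{xx}=f$ on $(0,1)$ with $\bar z_x(0)-k_0\bar z(0)=0$, $\bar z_x(1)+k_1\bar z(1)=0$. *)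

theory Defs
  imports Complex_Main "Jordan_Normal_Form.Matrix"
begin

text \<open>Green's function of z'' = f on (0,1) with Robin boundary conditions
 z'(0) - k0 z(0) = 0, z'(1) + k1 z(1) = 0.\<close>
definition green :: "real \<Rightarrow> real \<Rightarrow> real \<Rightarrow> real \<Rightarrow> real" where
  "green k0 k1 x \<zeta> =
     (if x < \<zeta> then (k1 * \<zeta> - k1 - 1) * (k0 * x + 1) / (k0 + k1 + k0 * k1)
      else (k1 * x - k1 - 1) * (k0 * \<zeta> + 1) / (k0 + k1 + k0 * k1))"

end

theory Submission
  imports Defs "Jordan_Normal_Form.Determinant"
begin

text \<open>With \<open>a t = k0 t + 1\<close> and \<open>b t = (k1 t - k1 - 1) / (k0 + k1 + k0 k1)\<close>, the solutions
  of \<open>z'' = 0\<close> satisfying the left and the right boundary condition, the matrix \<open>G(x\<^sub>i, x\<^sub>j)\<close> is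
  \<open>b(x\<^sub>i) a(x\<^sub>j)\<close> on and below the diagonal and \<open>a(x\<^sub>i) b(x\<^sub>j)\<close> above it.
  For such a semiseparable matrix a kernel vector \<open>w\<close> gives, with the partial sums
  \<open>P\<^sub>i = \<Sum>\<^sub>j\<^sub>\<le>\<^sub>i a\<^sub>j w\<^sub>j\<close> and \<open>Q\<^sub>i = \<Sum>\<^sub>j\<^sub>>\<^sub>i b\<^sub>j w\<^sub>j\<close>, the relations
  \<open>b\<^sub>i P\<^sub>i + a\<^sub>i Q\<^sub>i = 0\<close>; rows \<open>i\<close> and \<open>i+1\<close> share the pair \<open>(P\<^sub>i, Q\<^sub>i)\<close>, so
  \<open>P\<^sub>i = 0\<close> as soon as the Wronskian \<open>a\<^sub>i b\<^sub>i\<^sub>+\<^sub>1 - b\<^sub>i a\<^sub>i\<^sub>+\<^sub>1\<close> does not vanish, and the last row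
  gives \<open>P\<^sub>m\<^sub>-\<^sub>1 = 0\<close> from \<open>b\<^sub>m\<^sub>-\<^sub>1 \<noteq> 0\<close>. Hence all \<open>a\<^sub>j w\<^sub>j\<close> vanish. For the Green's function
  the Wronskian is \<open>x\<^sub>i\<^sub>+\<^sub>1 - x\<^sub>i > 0\<close>, \<open>a > 0\<close> and \<open>b < 0\<close> on \<open>(0,1)\<close>.\<close>

lemma invertible_mat_if_det_nonzero:
  fixes A :: "'a :: field mat"
  assumes A: "A \<in> carrier_mat n n" and det: "det A \<noteq> 0"
  shows "invertible_mat A"
proof -
  from det_non_zero_imp_unit[OF A det, of "()"]
  obtain B where "B \<in> carrier_mat n n" "A * B = 1\<^sub>m n" "B * A = 1\<^sub>m n"
    unfolding Units_def ring_mat_def by auto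
  then show ?thesis
    using A unfolding invertible_mat_def inverts_mat_def by auto
qed

lemma invertible_mat_if_kernel_trivial:
  fixes A :: "'a :: field mat"
  assumes A: "A \<in> carrier_mat n n"
    and kernel: "\<And>v. v \<in> carrier_vec n \<Longrightarrow> A *\<^sub>v v = 0\<^sub>v n \<Longrightarrow> v = 0\<^sub>v n"
  shows "invertible_mat A"
  using A kernel det_0_iff_vec_prod_zero_field[OF A] invertible_mat_if_det_nonzero by blast

lemma semiseparable_kernel_trivial:
  fixes a b w :: "nat \<Rightarrow> 'a :: field"
  assumes a_nonzero: "\<And>j. j < m \<Longrightarrow> a j \<noteq> 0"
    and b_last: "b (m - 1) \<noteq> 0"
    and wronskian: "\<And>i. Suc i < m \<Longrightarrow> a i * b (Suc i) \<noteq> b i * a (Suc i)"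
    and kernel: "\<And>i. i < m \<Longrightarrow> (\<Sum>j<m. (if j \<le> i then b i * a j else a i * b j) * w j) = 0"
    and i: "i < m"
  shows "w i = 0"
proof -
  define P where "P i = (\<Sum>j<Suc i. a j * w j)" for i
  define Q where "Q i = (\<Sum>j\<in>{Suc i..<m}. b j * w j)" for i
  have row: "b i * P i + a i * Q i = 0" if "i < m" for i
  proof -
    have split: "{..<m} = {..<Suc i} \<union> {Suc i..<m}" using that by auto
    have "(\<Sum>j<m. (if j \<le> i then b i * a j else a i * b j) * w j)
        = (\<Sum>j<Suc i. b i * (a j * w j)) + (\<Sum>j\<in>{Suc i..<m}. a i * (b j * w j))"
      unfolding split by (subst sum.union_disjoint) (auto intro!: sum.cong simp: mult.assoc)
    with kernel[OF that] show ?thesis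
      unfolding P_def Q_def sum_distrib_left by simp
  qed
  have P_zero: "P i = 0" if i: "i < m" for i
  proof (cases "Suc i < m")
    case True
    have "P (Suc i) = P i + a (Suc i) * w (Suc i)"
      unfolding P_def by simp
    moreover have "Q i = b (Suc i) * w (Suc i) + Q (Suc i)"
      unfolding Q_def using True by (simp add: sum.atLeast_Suc_lessThan)
    ultimately have next_row: "b (Suc i) * P i + a (Suc i) * Q i = 0"
      using row[OF True] by (simp add: algebra_simps)
    have "P i * (a i * b (Suc i) - b i * a (Suc i))
        = a i * (b (Suc i) * P i + a (Suc i) * Q i) - a (Suc i) * (b i * P i + a i * Q i)"
      by (simp add: algebra_simps)
    also have "\<dots> = 0"
      using next_row row[OF i] by simp
    finally show ?thesis
      using wronskian[OF True] by simp
  next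
    case False
    then have "i = m - 1" "Q i = 0"
      using i unfolding Q_def by auto
    then show ?thesis
      using row[OF i] b_last by simp
  qed
  show ?thesis
  proof (cases i)
    case 0
    then show ?thesis
      using P_zero[OF i] a_nonzero[OF i] unfolding P_def by simp
  next
    case (Suc k)
    have "P i = P k + a i * w i"
      unfolding P_def Suc by simp
    then show ?thesis
      using P_zero[OF i] P_zero[of k] a_nonzero[OF i] Suc i by simp
  qed
qed

lemma semiseparable_mat_invertible:
  fixes a b :: "nat \<Rightarrow> 'a :: field"
  assumes "\<And>j. j < m \<Longrightarrow> a j \<noteq> 0"
    and "b (m - 1) \<noteq> 0"
    and "\<And>i. Suc i < m \<Longrightarrow> a i * b (Suc i) \<noteq> b i * a (Suc i)"
  shows "invertible_mat (mat m m (\<lambda>(i, j). if j \<le> i then b i * a j else a i * b j))"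
    (is "invertible_mat ?S")
proof (rule invertible_mat_if_kernel_trivial)
  fix v assume v: "v \<in> carrier_vec m" and "?S *\<^sub>v v = 0\<^sub>v m"
  then have "(?S *\<^sub>v v) $ i = 0" if "i < m" for i
    using that by simp
  then have "(\<Sum>j<m. (if j \<le> i then b i * a j else a i * b j) * v $ j) = 0" if "i < m" for i
    using that v by (simp add: scalar_prod_def lessThan_atLeast0 mult.commute)
  with semiseparable_kernel_trivial[OF assms] show "v = 0\<^sub>v m"
    using v by (intro eq_vecI) auto
qed simp

definition robin_left :: "real \<Rightarrow> real \<Rightarrow> real" where
  "robin_left k0 t = k0 * t + 1"

definition robin_right :: "real \<Rightarrow> real \<Rightarrow> real \<Rightarrow> real" where
  "robin_right k0 k1 t = (k1 * t - k1 - 1) / (k0 + k1 + k0 * k1)"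

lemma green_eq_robin:
  "green k0 k1 s t =
     (if t \<le> s then robin_right k0 k1 s * robin_left k0 t else robin_left k0 s * robin_right k0 k1 t)"
  unfolding green_def robin_left_def robin_right_def by auto

lemma robin_wronskian:
  assumes "k0 + k1 + k0 * k1 \<noteq> 0"
  shows "robin_left k0 s * robin_right k0 k1 t - robin_right k0 k1 s * robin_left k0 t = t - s"
proof -
  have "(k0 * s + 1) * (k1 * t - k1 - 1) - (k1 * s - k1 - 1) * (k0 * t + 1)
      = (k0 + k1 + k0 * k1) * (t - s)"
    by (simp add: algebra_simps)
  then show ?thesis
    using assms unfolding robin_left_def robin_right_def
    by (simp add: diff_divide_distrib[symmetric] times_divide_eq_right)
qed

lemma robin_denominator_pos:
  fixes k0 k1 :: real
  assumes "k0 \<ge> 0" "k1 \<ge> 0" "k0 + k1 > 0"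
  shows "k0 + k1 + k0 * k1 > 0"
  using assms by (simp add: add_pos_nonneg)

lemma robin_left_pos: "k0 \<ge> 0 \<Longrightarrow> t \<ge> 0 \<Longrightarrow> robin_left k0 t > 0"
  unfolding robin_left_def by (simp add: add_nonneg_pos)

lemma robin_right_neg:
  assumes "k0 \<ge> 0" "k1 \<ge> 0" "k0 + k1 > 0" "t \<le> 1"
  shows "robin_right k0 k1 t < 0"
proof -
  have "k1 * t \<le> k1" using assms mult_left_mono[of t 1 k1] by simp
  moreover have "k0 + k1 + k0 * k1 > 0" using assms robin_denominator_pos by blast
  ultimately show ?thesis
    unfolding robin_right_def by (simp add: divide_neg_pos)
qed

theorem proposition2:
  fixes m :: nat and x :: "nat \<Rightarrow> real" and k0 k1 :: real
  assumes "m \<ge> 1"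
    and "\<And>i. i < m \<Longrightarrow> 0 < x i \<and> x i < 1"
    and "\<And>i j. i < j \<Longrightarrow> j < m \<Longrightarrow> x i < x j"
    and "k0 \<ge> 0" and "k1 \<ge> 0" and "k0 + k1 > 0"
  shows "invertible_mat (mat m m (\<lambda>(i, j). green k0 k1 (x i) (x j)))"
proof -
  define a where "a i = robin_left k0 (x i)" for i
  define b where "b i = robin_right k0 k1 (x i)" for i
  have order: "x j \<le> x i \<longleftrightarrow> j \<le> i" if "i < m" "j < m" for i j
    using assms(3)[of i j] assms(3)[of j i] that by (cases "i < j"; cases "j < i") auto
  have "mat m m (\<lambda>(i, j). green k0 k1 (x i) (x j))
      = mat m m (\<lambda>(i, j). if j \<le> i then b i * a j else a i * b j)"
    by (rule eq_matI) (auto simp: green_eq_robin a_def b_def order)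
  moreover have "k0 + k1 + k0 * k1 \<noteq> 0"
    using robin_denominator_pos[OF assms(4-6)] by simp
  then have "a i * b (Suc i) \<noteq> b i * a (Suc i)" if "Suc i < m" for i
    using robin_wronskian[of k0 k1 "x i" "x (Suc i)"] assms(3)[of i "Suc i"] that
    unfolding a_def b_def by auto
  moreover have "b (m - 1) \<noteq> 0"
    using robin_right_neg[OF assms(4-6), of "x (m - 1)"] assms(2)[of "m - 1"] assms(1)
    unfolding b_def by force
  moreover have "a j \<noteq> 0" if "j < m" for j
    using robin_left_pos[of k0 "x j"] assms(2)[OF that] assms(4) unfolding a_def by simp
  ultimately show ?thesis
    using semiseparable_mat_invertible[of m a b] by simp
qed

end
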